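(* Let $p>n$, let $\Theta\in\mathbb{R}^{p\times p}$ be symmetric positive definite with eigendecomposition $\Theta=PD^2P^T$ ($P$ orthogonal, $D$ diagonal), and let $X\in\mathbb{R}^{(n+1)\times p}$ have i.i.d. rows distributed as $\mathcal{N}_p(\mu,\Theta)$. Let $\Pi=I_{n+1}-(n+1)^{-1}\mathbf{1}\mathbf{1}^T$ and let $\Pi X=U\Lambda V^T$ be the singular value decomposition of $\Pi X$ with $\Lambda\in\mathbb{R}^{n\times n}$ diagonal (singular values in nonincreasing order), $U\in\mathbb{R}^{(n+1)\times n}$ and $V\in\mathbb{R}^{p\times n}$ with orthonormal columns. Let $H$ be any function mapping $n\times n$ diagonal matrices to $n\times n$ diagonal matrices, and define $\hat\Sigma_H=\frac1n VH(\Lambda^2)V^T$. Then (whenever the expectation exists) $\mathbb{E}\hat\Sigma_H=PC_H^2P^T$ for some diagonal matrix $C_H$.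
   Context: $\mathbf{1}$ denotes the all-ones vector in $\mathbb{R}^{n+1}$; $\Pi X$ has rank $n$ almost surely. *)

theory Defs
  imports "HOL-Analysis.Analysis" "HOL-Probability.Probability"
begin

definition diag_mat :: "real^'n^'n \<Rightarrow> bool" where
  "diag_mat A \<longleftrightarrow> (\<forall>i j. i \<noteq> j \<longrightarrow> A $ i $ j = 0)"

definition spd_mat :: "real^'n^'n \<Rightarrow> bool" where
  "spd_mat A \<longleftrightarrow> transpose A = A \<and> (\<forall>x. x \<noteq> 0 \<longrightarrow> x \<bullet> (A *v x) > 0)"

definition mvn_density :: "real^'p \<Rightarrow> real^'p^'p \<Rightarrow> real^'p \<Rightarrow> real" where
  "mvn_density mu Theta x =
     exp (- (1/2) * ((x - mu) \<bullet> (matrix_inv Theta *v (x - mu))))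
     / sqrt ((2 * pi) ^ CARD('p) * det Theta)"

definition gauss_rows :: "real^'p \<Rightarrow> real^'p^'p \<Rightarrow> (real^'p^'m) measure" where
  "gauss_rows mu Theta =
     density lborel (\<lambda>X. \<Prod>i\<in>UNIV. ennreal (mvn_density mu Theta (X $ i)))"

text \<open>Centering matrix Pi = I - (1/(n+1)) 1 1^T, with n+1 = CARD('m).\<close>
definition centering :: "real^'m^'m" where
  "centering = mat 1 - (\<chi> i j. 1 / real CARD('m))"

definition is_svd :: "real^'p^'m \<Rightarrow> real^('n::{finite,linorder})^'m \<Rightarrow> real^('n::{finite,linorder})^('n::{finite,linorder}) \<Rightarrow> real^('n::{finite,linorder})^'p \<Rightarrow> bool"
  where
  "is_svd A U L V \<longleftrightarrow>
     A = U ** L ** transpose V \<and>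
     transpose U ** U = mat 1 \<and> transpose V ** V = mat 1 \<and>
     diag_mat L \<and> (\<forall>k. L $ k $ k \<ge> 0) \<and>
     (\<forall>k l. k \<le> l \<longrightarrow> L $ l $ l \<le> L $ k $ k)"

end

theory Submission
  imports Defs
begin

text \<open>
  The law of the data matrix is invariant under the affine maps
  X \<mapsto> X S^T + 1 (\<mu> - S \<mu>)^T for every orthogonal S commuting with \<Theta>; in particular
  for the reflections S = P E P^T with E a diagonal sign matrix.  Such a map right-multiplies
  \<Pi>X by S^T, so it replaces V by S V in a singular value decomposition.  For almost every X the
  singular values of \<Pi>X are distinct and positive (a nonzero polynomial in X certifies this),
  and then the SVD is unique up to the signs of the columns of V, which the diagonal H(\<Lambda>^2)
  does not see.  Hence the estimator is equivariant almost surely, its expectation M satisfies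
  M = S M S^T for all these reflections, and P^T M P commutes with every sign matrix, i.e. is
  diagonal.
\<close>

section \<open>Isometries preserve Lebesgue measure\<close>

lemma emeasure_lborel_ball_translate:
  "emeasure lborel (ball (c::'a::euclidean_space) e) = emeasure lborel (ball (d::'a) e)"
  by (cases "e \<ge> 0") (simp_all add: emeasure_ball ball_empty)

lemma open_ae_disjoint_balls:
  fixes U :: "'a::euclidean_space set"
  assumes U: "open U"
  obtains C where "countable C" and "\<And>i. i \<in> C \<Longrightarrow> ball (fst i) (snd i) \<subseteq> U"
    and "disjoint_family_on (\<lambda>i. ball (fst i) (snd i)) C"
    and "U - (\<Union>i\<in>C. ball (fst i) (snd i)) \<in> null_sets lborel"
proof -
  define K where "K = {i::'a \<times> real. 0 < snd i \<and> ball (fst i) (snd i) \<subseteq> U}"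
  obtain C where C: "countable C" "C \<subseteq> K"
    and disj: "pairwise (\<lambda>i j. disjnt (ball (fst i) (snd i)) (ball (fst j) (snd j))) C"
    and negl: "negligible (U - (\<Union>i\<in>C. ball (fst i) (snd i)))"
  proof (rule Vitali_covering_theorem_balls[of U K fst snd])
    fix x and d :: real assume "x \<in> U" "0 < d"
    then obtain e where "e > 0" "ball x e \<subseteq> U" using U open_contains_ball by blast
    with \<open>0 < d\<close> show "\<exists>i. i \<in> K \<and> x \<in> ball (fst i) (snd i) \<and> snd i < d"
      by (intro exI[of _ "(x, min e (d/2))"]) (auto simp: K_def)
  qed blast+
  show ?thesis
  proof
    show "disjoint_family_on (\<lambda>i. ball (fst i) (snd i)) C"
      using disj unfolding disjoint_family_on_def pairwise_def disjnt_def by metis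
    have "U - (\<Union>i\<in>C. ball (fst i) (snd i)) \<in> sets borel"
      using U C(1) by (intro sets.Diff sets.countable_UN'') auto
    then show "U - (\<Union>i\<in>C. ball (fst i) (snd i)) \<in> null_sets lborel"
      using negl by (metis negligible_iff_null_sets null_sets_completion_iff sets_lborel)
  qed (use C K_def in auto)
qed

lemma emeasure_lborel_vimage_isometry_open:
  fixes f :: "'a::euclidean_space \<Rightarrow> 'a"
  assumes lin: "linear f" and iso: "\<And>x. norm (f x) = norm x" and U: "open U"
  shows "emeasure lborel (f -` U) = emeasure lborel U"
proof -
  have "inj f"
    by (rule injI) (metis iso lin linear_diff norm_eq_zero right_minus_eq)
  then obtain h where hl: "linear h" and hf: "\<And>x. h (f x) = x" and fh: "\<And>x. f (h x) = x"
    using linear_injective_isomorphism[OF lin] by metis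
  have fmeas: "f \<in> borel_measurable borel"
    by (simp add: lin borel_measurable_continuous_onI linear_continuous_on linear_linear)
  have vimage_ball: "f -` ball c e = ball (h c) e" for c e
  proof -
    have "dist c (f x) = dist (h c) x" for x
      by (metis dist_norm fh iso lin linear_diff)
    then show ?thesis by auto
  qed
  obtain C where C: "countable C" "\<And>i. i \<in> C \<Longrightarrow> ball (fst i) (snd i) \<subseteq> U"
    and disj: "disjoint_family_on (\<lambda>i. ball (fst i) (snd i)) C"
    and R_null: "U - (\<Union>i\<in>C. ball (fst i) (snd i)) \<in> null_sets lborel"
    using open_ae_disjoint_balls[OF U] by blast
  define B where "B = (\<Union>i\<in>C. ball (fst i) (snd i))"
  define R where "R = U - B"
  have B_sets: "B \<in> sets borel" unfolding B_def using C(1) by (intro sets.countable_UN'') auto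
  have U_eq: "U = B \<union> R" using C(2) by (auto simp: R_def B_def)
  have R_null': "R \<in> null_sets lborel" using R_null by (simp add: R_def B_def)
  have fR_null: "f -` R \<in> null_sets lborel"
  proof -
    have "f -` R = h ` R" by (force simp: fh hf image_iff)
    moreover have "negligible R"
      using null_sets_completionI[OF R_null'] by (simp add: negligible_iff_null_sets)
    ultimately have "negligible (f -` R)"
      using hl by (auto intro: negligible_differentiable_image_negligible linear_imp_differentiable_on)
    moreover have "f -` R \<in> sets borel"
      using R_null' by (intro measurable_sets_borel[OF fmeas]) (simp add: null_sets_def)
    ultimately show ?thesis
      by (metis negligible_iff_null_sets null_sets_completion_iff sets_lborel)
  qed
  have "disjoint_family_on (\<lambda>i. f -` ball (fst i) (snd i)) C"
    using disj unfolding disjoint_family_on_def by (metis vimage_Int vimage_empty)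
  then have fB: "emeasure lborel (f -` B) = emeasure lborel B"
    unfolding B_def vimage_UN using C(1) disj
    by (simp add: emeasure_UN_countable vimage_ball)
      (metis emeasure_lborel_ball_translate)
  have "emeasure lborel (f -` U) = emeasure lborel (f -` B)"
    unfolding U_eq vimage_Un using fR_null measurable_sets_borel[OF fmeas B_sets]
    by (intro emeasure_Un_null_set) auto
  also have "\<dots> = emeasure lborel U"
    unfolding fB U_eq using R_null' B_sets by (intro emeasure_Un_null_set[symmetric]) auto
  finally show ?thesis .
qed

lemma distr_lborel_isometry:
  fixes f :: "'a::euclidean_space \<Rightarrow> 'a"
  assumes lin: "linear f" and iso: "\<And>x. norm (f x) = norm x"
  shows "distr lborel borel f = lborel"
proof -
  have fmeas[measurable]: "f \<in> borel_measurable borel"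
    by (simp add: lin borel_measurable_continuous_onI linear_continuous_on linear_linear)
  have open_eq: "emeasure (distr lborel borel f) U = emeasure lborel U" if "open U" for U
    using that by (simp add: emeasure_distr emeasure_lborel_vimage_isometry_open[OF lin iso])
  show ?thesis
  proof (rule measure_eqI_generator_eq[where E="{S. open S}" and \<Omega>=UNIV and A="\<lambda>i. ball 0 (real i)"])
    show "(\<Union>i. ball (0::'a) (real i)) = UNIV"
      by (auto intro: reals_Archimedean2 exI)
    show "emeasure (distr lborel borel f) (ball 0 (real i)) \<noteq> \<infinity>" for i
      using open_eq[of "ball 0 (real i)"] emeasure_lborel_ball_finite[of 0 "real i"] by (simp add: less_top)
  qed (auto simp: open_eq Int_stable_def sets_borel)
qed

lemma distr_lborel_affine_isometry:
  fixes f :: "'a::euclidean_space \<Rightarrow> 'a"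
  assumes lin: "linear f" and iso: "\<And>x. norm (f x) = norm x"
  shows "distr lborel borel (\<lambda>x. f x + c) = lborel"
proof -
  have [measurable]: "f \<in> borel_measurable borel"
    by (simp add: lin borel_measurable_continuous_onI linear_continuous_on linear_linear)
  have "distr lborel borel (\<lambda>x. f x + c) = distr (distr lborel borel f) borel ((+) c)"
    by (subst distr_distr) (auto simp: o_def add.commute)
  also have "\<dots> = lborel"
    using lborel_affine[of 1 c] by (simp add: distr_lborel_isometry[OF lin iso] density_1)
  finally show ?thesis .
qed

section \<open>Zero sets of polynomials\<close>

lemma finite_zeros_real_polynomial_function:
  fixes g :: "real \<Rightarrow> real"
  assumes "real_polynomial_function g" "g a \<noteq> 0"
  shows "finite {t. g t = 0}"
proof -
  obtain c n where g: "g = (\<lambda>x. \<Sum>i\<le>n. c i * x ^ i)"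
    using real_polynomial_function_imp_sum[OF assms(1)] by blast
  have "\<exists>i\<le>n. c i \<noteq> 0"
    using assms(2) unfolding g by (force intro: sum.neutral)
  then show ?thesis unfolding g using polyfun_finite_roots by blast
qed

lemma emeasure_lborel_homothety:
  fixes Z :: "'a::euclidean_space set"
  assumes t: "t \<noteq> 0" and Z[measurable]: "Z \<in> sets borel"
  shows "emeasure lborel Z = ennreal (\<bar>t\<bar> ^ DIM('a)) * (\<integral>\<^sup>+y. indicator Z (x0 + t *\<^sub>R (y - x0)) \<partial>lborel)"
proof -
  let ?T = "\<lambda>y. (x0 - t *\<^sub>R x0) + t *\<^sub>R y"
  have "emeasure lborel Z = emeasure (density (distr lborel borel ?T) (\<lambda>_. ennreal (\<bar>t\<bar> ^ DIM('a)))) Z"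
    using lborel_affine[OF t, of "x0 - t *\<^sub>R x0"] by simp
  also have "\<dots> = ennreal (\<bar>t\<bar> ^ DIM('a)) * emeasure lborel (?T -` Z)"
    by (simp add: emeasure_density_const emeasure_distr)
  also have "emeasure lborel (?T -` Z) = (\<integral>\<^sup>+y. indicator (?T -` Z) y \<partial>lborel)"
  proof -
    have T: "?T \<in> borel_measurable borel" by measurable
    show ?thesis
      using measurable_sets_borel[OF T Z] by (simp add: nn_integral_indicator)
  qed
  also have "\<dots> = (\<integral>\<^sup>+y. indicator Z (x0 + t *\<^sub>R (y - x0)) \<partial>lborel)"
    by (intro nn_integral_cong) (simp add: indicator_def algebra_simps)
  finally show ?thesis .
qed

lemma AE_real_polynomial_function_nonzero_on_line:
  assumes q: "real_polynomial_function q" and q0: "q x0 \<noteq> 0"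
  shows "AE t in lborel. q (x0 + t *\<^sub>R (y - x0)) \<noteq> 0"
proof -
  have "polynomial_function (\<lambda>t. x0 + t *\<^sub>R (y - x0))"
    by (simp add: polynomial_function_add polynomial_function_const
        polynomial_function_bounded_linear bounded_linear_scaleR_left)
  then have "finite {t. q (x0 + t *\<^sub>R (y - x0)) = 0}"
    by (intro finite_zeros_real_polynomial_function[of _ 0])
      (use q0 real_polynomial_function_compose[OF _ q] in \<open>auto simp: o_def\<close>)
  then have "AE t in lborel. t \<notin> {t. q (x0 + t *\<^sub>R (y - x0)) = 0}"
    by (intro AE_not_in finite_imp_null_set_lborel)
  then show ?thesis by simp
qed

text \<open>Rescaling about a point x0 with q x0 \<noteq> 0 by a factor t \<in> [1, 2] changes the measure of
  the zero set by at most 2^DIM; averaging over t and exchanging the integrals, it suffices that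
  every line through x0 meets the zero set in finitely many points.\<close>
lemma real_polynomial_function_zeros_null:
  fixes q :: "'a::euclidean_space \<Rightarrow> real"
  assumes q: "real_polynomial_function q" and q0: "q x0 \<noteq> 0"
  shows "{x. q x = 0} \<in> null_sets lborel"
proof -
  define Z where "Z = {x. q x = 0}"
  have "continuous_on UNIV q"
    using q continuous_on_polymonial_function real_polynomial_function_eq by blast
  then have "closed Z" unfolding Z_def
    using continuous_closed_preimage_constant[OF _ closed_UNIV, of q 0] by simp
  then have Z_sets[measurable]: "Z \<in> sets borel" by simp
  define E where "E = (\<lambda>t. \<integral>\<^sup>+y. indicator Z (x0 + t *\<^sub>R (y - x0)) \<partial>lborel)"
  have line: "(\<integral>\<^sup>+t. indicator {1..2} t * indicator Z (x0 + t *\<^sub>R (y - x0)) \<partial>lborel) = 0" for y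
  proof -
    have "AE t in lborel. indicator {1..2} t * indicator Z (x0 + t *\<^sub>R (y - x0)) = (0::ennreal)"
      using AE_real_polynomial_function_nonzero_on_line[OF q q0, of y]
      by eventually_elim (simp add: Z_def)
    then show ?thesis by (simp add: nn_integral_0_iff_AE)
  qed
  have "emeasure lborel Z = (\<integral>\<^sup>+t. indicator {1..2::real} t * emeasure lborel Z \<partial>lborel)"
    by (simp add: nn_integral_multc)
  also have "\<dots> \<le> (\<integral>\<^sup>+t. ennreal (2 ^ DIM('a)) * (indicator {1..2} t * E t) \<partial>lborel)"
  proof (intro nn_integral_mono)
    fix t :: real
    show "indicator {1..2} t * emeasure lborel Z \<le> ennreal (2 ^ DIM('a)) * (indicator {1..2} t * E t)"
    proof (cases "t \<in> {1..2}")
      case True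
      then have "emeasure lborel Z = ennreal (\<bar>t\<bar> ^ DIM('a)) * E t"
        unfolding E_def by (intro emeasure_lborel_homothety) auto
      also have "\<dots> \<le> ennreal (2 ^ DIM('a)) * E t"
        using True by (intro mult_right_mono ennreal_leI power_mono) auto
      finally show ?thesis using True by simp
    qed simp
  qed
  also have "\<dots> = ennreal (2 ^ DIM('a)) * (\<integral>\<^sup>+t. indicator {1..2} t * E t \<partial>lborel)"
    unfolding E_def by (rule nn_integral_cmult) measurable
  also have "(\<integral>\<^sup>+t. indicator {1..2} t * E t \<partial>lborel)
      = (\<integral>\<^sup>+t. \<integral>\<^sup>+y. indicator {1..2} t * indicator Z (x0 + t *\<^sub>R (y - x0)) \<partial>lborel \<partial>lborel)"
    unfolding E_def by (intro nn_integral_cong nn_integral_cmult[symmetric]) measurable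
  also have "\<dots> = (\<integral>\<^sup>+y. \<integral>\<^sup>+t. indicator {1..2} t * indicator Z (x0 + t *\<^sub>R (y - x0)) \<partial>lborel \<partial>lborel)"
    by (rule lborel_pair.Fubini') measurable
  also have "\<dots> = 0" by (simp add: line)
  finally show ?thesis by (simp add: Z_def[symmetric] null_sets_def)
qed

section \<open>Uniqueness of the singular value decomposition\<close>

lemma card_lessThan_eq_imp_eq:
  fixes a b :: "'a::{finite,linorder}"
  assumes "card {..<a} = card {..<b}"
  shows "a = b"
proof -
  have "card {..<x} < card {..<y}" if "x < y" for x y :: 'a
    using that by (intro psubset_card_mono) auto
  then show ?thesis using assms by (metis less_irrefl linorder_neqE)
qed

lemma strict_mono_finite_eq_id:
  fixes s :: "'a::{finite,linorder} \<Rightarrow> 'a"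
  assumes "strict_mono s"
  shows "s j = j"
proof -
  have "inj s" using assms by (rule strict_mono_imp_inj_on)
  then have "surj s" by (simp add: finite_UNIV_inj_surj)
  have "s ` {..<j} = {..<s j}"
  proof
    show "s ` {..<j} \<subseteq> {..<s j}" using assms by (auto simp: strict_mono_def)
    show "{..<s j} \<subseteq> s ` {..<j}"
    proof
      fix k assume "k \<in> {..<s j}"
      moreover obtain i where "k = s i" using \<open>surj s\<close> by (metis surjD)
      ultimately show "k \<in> s ` {..<j}" using strict_mono_less[OF assms] by auto
    qed
  qed
  then have "card {..<s j} = card {..<j}"
    using card_image[OF inj_on_subset[OF \<open>inj s\<close>]] by (metis subset_UNIV)
  then show ?thesis by (rule card_lessThan_eq_imp_eq)
qed

definition diag_matrix :: "('n::finite \<Rightarrow> real) \<Rightarrow> real^'n^'n" where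
  "diag_matrix d = (\<chi> i j. if i = j then d i else 0)"

lemma diag_matrix_nth [simp]: "diag_matrix d $ i $ j = (if i = j then d i else 0)"
  by (simp add: diag_matrix_def)

lemma diag_mat_diag_matrix [simp]: "diag_mat (diag_matrix d)"
  by (simp add: diag_mat_def)

lemma transpose_diag_matrix [simp]: "transpose (diag_matrix d) = diag_matrix d"
  by (simp add: transpose_def vec_eq_iff)

lemma diag_matrix_one: "diag_matrix (\<lambda>_. 1) = mat 1"
  by (simp add: mat_def vec_eq_iff)

lemma diag_mat_imp_eq_diag_matrix: "diag_mat L \<Longrightarrow> L = diag_matrix (\<lambda>k. L $ k $ k)"
  by (auto simp: diag_mat_def vec_eq_iff)

lemma diag_matrix_mult_nth: "(diag_matrix a ** M) $ i $ j = a i * M $ i $ j"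
  by (simp add: matrix_matrix_mult_def if_distrib[of "\<lambda>x. x * _"] cong: if_cong)

lemma mult_diag_matrix_nth: "(M ** diag_matrix a) $ i $ j = M $ i $ j * a j"
  by (simp add: matrix_matrix_mult_def if_distrib[of "\<lambda>x. _ * x"] cong: if_cong)

lemma diag_matrix_mult_diag_matrix: "diag_matrix a ** diag_matrix b = diag_matrix (\<lambda>k. a k * b k)"
  by (simp add: vec_eq_iff diag_matrix_mult_nth)

lemma diag_mat_mult: "diag_mat A \<Longrightarrow> diag_mat B \<Longrightarrow> diag_mat (A ** B)"
  by (metis diag_mat_imp_eq_diag_matrix diag_matrix_mult_diag_matrix diag_mat_diag_matrix)

lemma det_diag_matrix: "det (diag_matrix d) = prod d UNIV"
  by (subst det_diagonal) auto

lemma trace_diag_matrix: "trace (diag_matrix d) = sum d UNIV"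
  by (simp add: trace_def)

lemma gram_orthonormal_factor:
  fixes U :: "real^'n^'m" and V :: "real^'n^'p"
  assumes "transpose U ** U = mat 1"
  shows "transpose (U ** diag_matrix s ** transpose V) ** (U ** diag_matrix s ** transpose V)
    = V ** diag_matrix (\<lambda>k. (s k)^2) ** transpose V"
proof -
  have "transpose (U ** diag_matrix s ** transpose V) ** (U ** diag_matrix s ** transpose V)
      = V ** (diag_matrix s ** (transpose U ** U) ** diag_matrix s) ** transpose V"
    by (simp add: matrix_transpose_mul matrix_mul_assoc)
  then show ?thesis
    by (simp add: assms diag_matrix_mult_diag_matrix power2_eq_square)
qed

lemma is_svd_gram:
  fixes L :: "real^('n::{finite,linorder})^('n::{finite,linorder})"
  assumes "is_svd A U L V"
  shows "transpose A ** A = V ** diag_matrix (\<lambda>k. (L $ k $ k)^2) ** transpose V"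
proof -
  have "A = U ** diag_matrix (\<lambda>k. L $ k $ k) ** transpose V" and "transpose U ** U = mat 1"
    using assms diag_mat_imp_eq_diag_matrix[of L] by (auto simp: is_svd_def)
  then show ?thesis
    using gram_orthonormal_factor by simp
qed

text \<open>A nonzero entry W i j forces a i = b j; since every column of W has a nonzero entry
  and both sequences are strictly decreasing, this matches columns to rows by the identity.\<close>
lemma orthogonal_intertwining_strictly_decreasing:
  fixes W :: "real^('n::{finite,linorder})^('n::{finite,linorder})"
    and a b :: "'n::{finite,linorder} \<Rightarrow> real"
  assumes WW: "transpose W ** W = mat 1"
    and comm: "diag_matrix a ** W = W ** diag_matrix b"
    and a: "\<And>i j. i < j \<Longrightarrow> a j < a i" and b: "\<And>i j. i < j \<Longrightarrow> b j < b i"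
  shows "b = a" and "W = diag_matrix (\<lambda>k. W $ k $ k)"
proof -
  have match: "a i = b j" if "W $ i $ j \<noteq> 0" for i j
    using arg_cong[OF comm, of "\<lambda>M. M $ i $ j"] that by (simp add: diag_matrix_mult_nth mult_diag_matrix_nth)
  have "inj a"
    by (rule injI) (metis a less_irrefl linorder_neqE)
  have "\<exists>i. W $ i $ j \<noteq> 0" for j
  proof (rule ccontr)
    assume "\<not> (\<exists>i. W $ i $ j \<noteq> 0)"
    then have "(transpose W ** W) $ j $ j = 0" by (simp add: matrix_matrix_mult_def transpose_def)
    then show False using WW by (simp add: mat_def)
  qed
  then obtain s where s: "\<And>j. W $ s j $ j \<noteq> 0" by metis
  have as: "a (s j) = b j" for j using match[OF s] .
  have s_unique: "i = s j" if "W $ i $ j \<noteq> 0" for i j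
    using match[OF that] as \<open>inj a\<close> by (metis injD)
  have "strict_mono s"
  proof (rule strict_monoI)
    fix i j :: 'n assume "i < j"
    then have "a (s j) < a (s i)" using b by (simp add: as)
    then show "s i < s j" using a by (metis less_asym linorder_neqE)
  qed
  then have s_id: "s j = j" for j by (rule strict_mono_finite_eq_id)
  show "b = a" using as s_id by (simp add: fun_eq_iff)
  show "W = diag_matrix (\<lambda>k. W $ k $ k)"
    using s_unique s_id by (auto simp: vec_eq_iff)
qed

lemma orthonormal_diagonalization_change:
  fixes V V' :: "real^'n^'p"
  assumes orth: "transpose V ** V = mat 1" "transpose V' ** V' = mat 1"
    and G: "V ** diag_matrix a ** transpose V = V' ** diag_matrix b ** transpose V'"
    and b: "\<And>k. b k \<noteq> 0"
  defines "W \<equiv> transpose V ** V'"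
  shows "V ** W = V'" and "transpose W ** W = mat 1" and "diag_matrix a ** W = W ** diag_matrix b"
proof -
  have VV: "transpose V ** (V ** X) = X" and VV': "transpose V' ** (V' ** X) = X"
    for X :: "real^'k^'n"
    using orth by (simp_all add: matrix_mul_assoc)
  have GV': "V ** (diag_matrix a ** W) = V' ** diag_matrix b"
    using arg_cong[OF G, of "\<lambda>M. M ** V'"] by (simp add: W_def matrix_mul_assoc[symmetric] VV' orth)
  show VW: "V ** W = V'"
  proof -
    have "V ** W ** diag_matrix b = V ** (transpose V ** (V' ** diag_matrix b))"
      by (simp add: W_def matrix_mul_assoc)
    also have "\<dots> = V ** (transpose V ** (V ** (diag_matrix a ** W)))"
      by (simp only: GV')
    also have "\<dots> = V' ** diag_matrix b"
      unfolding VV by (rule GV')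
    finally have "V ** W ** diag_matrix b ** diag_matrix (\<lambda>k. inverse (b k))
        = V' ** diag_matrix b ** diag_matrix (\<lambda>k. inverse (b k))"
      by simp
    then show ?thesis
      using b by (simp add: matrix_mul_assoc[symmetric] diag_matrix_mult_diag_matrix diag_matrix_one)
  qed
  show "transpose W ** W = mat 1"
    using VV'[of "mat 1"] unfolding VW[symmetric]
    by (simp add: matrix_transpose_mul matrix_mul_assoc[symmetric] VV)
  show "diag_matrix a ** W = W ** diag_matrix b"
    using arg_cong[OF GV', of "\<lambda>M. transpose V ** M"]
    by (simp add: VV W_def matrix_mul_assoc[symmetric])
qed

lemma is_svd_unique:
  fixes A :: "real^'p^'m"
    and U U' :: "real^('n::{finite,linorder})^'m"
    and L L' :: "real^('n::{finite,linorder})^('n::{finite,linorder})"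
    and V V' :: "real^('n::{finite,linorder})^'p"
  assumes svd: "is_svd A U L V" and svd': "is_svd A U' L' V'"
    and pos: "\<And>k. L $ k $ k > 0" and pos': "\<And>k. L' $ k $ k > 0"
    and dec: "\<And>k l. k < l \<Longrightarrow> L $ l $ l < L $ k $ k"
    and dec': "\<And>k l. k < l \<Longrightarrow> L' $ l $ l < L' $ k $ k"
  shows "L' = L" and "\<exists>w. (\<forall>k. (w k)^2 = 1) \<and> V' = V ** diag_matrix w"
proof -
  define lam where "lam = (\<lambda>k. (L $ k $ k)^2)"
  define lam' where "lam' = (\<lambda>k. (L' $ k $ k)^2)"
  define W where "W = transpose V ** V'"
  have "V ** diag_matrix lam ** transpose V = V' ** diag_matrix lam' ** transpose V'"
    using is_svd_gram[OF svd] is_svd_gram[OF svd'] by (simp add: lam_def lam'_def)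
  moreover have "lam' k \<noteq> 0" for k using pos'[of k] by (simp add: lam'_def)
  ultimately have VW: "V ** W = V'" and WW: "transpose W ** W = mat 1"
    and comm: "diag_matrix lam ** W = W ** diag_matrix lam'"
    using svd svd' orthonormal_diagonalization_change[of V V' lam lam'] by (simp_all add: is_svd_def W_def)
  have lam_dec: "lam l < lam k" if "k < l" for k l
    using dec[OF that] pos[of l] by (simp add: lam_def power_strict_mono)
  have lam'_dec: "lam' l < lam' k" if "k < l" for k l
    using dec'[OF that] pos'[of l] by (simp add: lam'_def power_strict_mono)
  note diagonal = orthogonal_intertwining_strictly_decreasing[OF WW comm lam_dec lam'_dec]
  have "diag_mat L" "diag_mat L'"
    using svd svd' by (simp_all add: is_svd_def)
  have "L' = diag_matrix (\<lambda>k. L' $ k $ k)"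
    using \<open>diag_mat L'\<close> by (rule diag_mat_imp_eq_diag_matrix)
  also have "\<dots> = diag_matrix (\<lambda>k. L $ k $ k)"
    using diagonal(1) pos pos' by (simp add: fun_eq_iff lam_def lam'_def less_imp_le)
  also have "\<dots> = L"
    using \<open>diag_mat L\<close> by (rule diag_mat_imp_eq_diag_matrix[symmetric])
  finally show "L' = L" .
  define w where "w = (\<lambda>k. W $ k $ k)"
  have W_nth: "W $ i $ j = (if i = j then w j else 0)" for i j
    using arg_cong[OF diagonal(2), of "\<lambda>M. M $ i $ j"] by (simp add: w_def)
  have "(w k)^2 = 1" for k
    using arg_cong[OF WW, of "\<lambda>M. M $ k $ k"]
    by (simp add: W_nth matrix_matrix_mult_def transpose_def mat_def power2_eq_square
        if_distrib[of "\<lambda>x. x * _"] cong: if_cong)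
  moreover have "W = diag_matrix w"
    unfolding w_def by (rule diagonal(2))
  then have "V' = V ** diag_matrix w"
    using VW by simp
  ultimately show "\<exists>w. (\<forall>k. (w k)^2 = 1) \<and> V' = V ** diag_matrix w"
    by blast
qed

section \<open>A polynomial certificate for distinct positive singular values\<close>

primrec matpow :: "real^'n^'n \<Rightarrow> nat \<Rightarrow> real^'n^'n" where
  "matpow A 0 = mat 1"
| "matpow A (Suc k) = A ** matpow A k"

lemma orthonormal_conj_mult:
  fixes V :: "real^'n^'p"
  assumes "transpose V ** V = mat 1"
  shows "(V ** diag_matrix a ** transpose V) ** (V ** diag_matrix b ** transpose V)
    = V ** diag_matrix (\<lambda>k. a k * b k) ** transpose V"
proof -
  have "(V ** diag_matrix a ** transpose V) ** (V ** diag_matrix b ** transpose V)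
      = V ** (diag_matrix a ** (transpose V ** V) ** diag_matrix b) ** transpose V"
    by (simp add: matrix_mul_assoc)
  then show ?thesis by (simp add: assms diag_matrix_mult_diag_matrix)
qed

lemma matpow_orthonormal_conj:
  fixes V :: "real^'n^'p"
  assumes "transpose V ** V = mat 1"
  shows "matpow (V ** diag_matrix d ** transpose V) (Suc e) = V ** diag_matrix (\<lambda>k. d k ^ Suc e) ** transpose V"
  by (induction e) (simp_all add: orthonormal_conj_mult[OF assms])

lemma trace_orthonormal_conj:
  fixes V :: "real^'n^'p"
  assumes "transpose V ** V = mat 1"
  shows "trace (V ** diag_matrix d ** transpose V) = sum d UNIV"
proof -
  have "trace (V ** diag_matrix d ** transpose V) = trace (transpose V ** (V ** diag_matrix d))"
    by (rule trace_mul_sym)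
  also have "\<dots> = trace (diag_matrix d)" by (simp add: matrix_mul_assoc assms)
  finally show ?thesis by (simp add: trace_diag_matrix)
qed

definition trace_hankel :: "real^'p^'p \<Rightarrow> ('n::finite \<Rightarrow> nat) \<Rightarrow> real^'n^'n" where
  "trace_hankel G r = (\<chi> i j. trace (matpow G (Suc (r i + r j))))"

definition power_sum_hankel :: "('n::finite \<Rightarrow> real) \<Rightarrow> ('n \<Rightarrow> nat) \<Rightarrow> real^'n^'n" where
  "power_sum_hankel d r = (\<chi> i j. \<Sum>k\<in>UNIV. d k ^ Suc (r i + r j))"

definition vandermonde :: "('n::finite \<Rightarrow> real) \<Rightarrow> ('n \<Rightarrow> nat) \<Rightarrow> real^'n^'n" where
  "vandermonde d r = (\<chi> k i. d k ^ r i)"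

lemma trace_hankel_orthonormal_conj:
  fixes V :: "real^'n^'p"
  assumes "transpose V ** V = mat 1"
  shows "trace_hankel (V ** diag_matrix d ** transpose V) r = power_sum_hankel d r"
  by (simp add: trace_hankel_def power_sum_hankel_def matpow_orthonormal_conj[OF assms]
      trace_orthonormal_conj[OF assms] del: matpow.simps)

lemma power_sum_hankel_eq_vandermonde:
  "power_sum_hankel d r = transpose (vandermonde d r) ** diag_matrix d ** vandermonde d r"
  by (simp add: power_sum_hankel_def vandermonde_def vec_eq_iff matrix_matrix_mult_def transpose_def
      if_distrib[of "\<lambda>x. _ * x"] power_add mult_ac cong: if_cong)

lemma det_power_sum_hankel: "det (power_sum_hankel d r) = det (vandermonde d r) ^ 2 * prod d UNIV"
  by (simp add: power_sum_hankel_eq_vandermonde det_mul det_diag_matrix power2_eq_square)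

lemma det_power_sum_hankel_nonzero_imp:
  assumes "det (power_sum_hankel d r) \<noteq> 0"
  shows "inj d" and "d k \<noteq> 0"
proof -
  show "inj d"
  proof (rule injI, rule ccontr)
    fix a b assume "d a = d b" "a \<noteq> b"
    then have "det (vandermonde d r) = 0"
      by (intro det_identical_rows[of a b]) (simp_all add: row_def vandermonde_def)
    then show False using assms by (simp add: det_power_sum_hankel)
  qed
  show "d k \<noteq> 0"
    using assms by (auto simp: det_power_sum_hankel prod_zero_iff)
qed

text \<open>A kernel vector supplies the coefficients of a polynomial of degree less than CARD('n)
  vanishing at the CARD('n) distinct points d k.\<close>
lemma det_vandermonde_nonzero:
  fixes d :: "'n::finite \<Rightarrow> real"
  assumes "inj d" and r: "bij_betw r UNIV {..<CARD('n)}"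
  shows "det (vandermonde d r) \<noteq> 0"
proof -
  define N where "N = CARD('n) - 1"
  have ker: "x = 0" if x: "vandermonde d r *v x = 0" for x
  proof -
    define c where "c j = (\<Sum>i | r i = j. x $ i)" for j
    have r_le: "r i \<le> N" for i
      using bij_betw_apply[OF r UNIV_I, of i] unfolding N_def lessThan_iff by arith
    then have poly: "(\<Sum>j\<le>N. c j * z ^ j) = (\<Sum>i\<in>UNIV. x $ i * z ^ r i)" for z
      unfolding c_def sum_distrib_right
      by (subst sum.group[symmetric, of UNIV "{..N}" r]) (auto intro!: sum.cong)
    have roots: "range d \<subseteq> {z. (\<Sum>j\<le>N. c j * z ^ j) = 0}"
      using x by (auto simp: poly vec_eq_iff matrix_vector_mult_def vandermonde_def mult.commute)
    have c0: "c j = 0" if "j \<le> N" for j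
    proof (rule ccontr)
      assume "c j \<noteq> 0"
      then have "finite {z. (\<Sum>j\<le>N. c j * z ^ j) = 0} \<and> card {z. (\<Sum>j\<le>N. c j * z ^ j) = 0} \<le> N"
        using polyfun_rootbound[of N c] \<open>j \<le> N\<close> by blast
      then have "card (range d) \<le> N" using card_mono[OF _ roots] by (meson order_trans)
      moreover have "card (range d) = CARD('n)" using \<open>inj d\<close> by (simp add: card_image)
      moreover have "N < CARD('n)" unfolding N_def using finite_UNIV_card_ge_0 by fastforce
      ultimately show False by linarith
    qed
    have "c (r i) = x $ i" for i
    proof -
      have "{i'. r i' = r i} = {i}" using r by (auto simp: bij_betw_def inj_def)
      then show ?thesis by (simp add: c_def)
    qed
    then show "x = 0" using c0 r_le by (simp add: vec_eq_iff)
  qed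
  then have "\<exists>B. B ** vandermonde d r = mat 1"
    by (simp add: matrix_left_invertible_ker)
  then show ?thesis by (simp add: invertible_det_nz[symmetric] invertible_left_inverse)
qed

text \<open>If \<Pi>X = U diag(s) V^T then the Hankel matrix of power traces of the Gram matrix factors
  as Vandermonde^T diag(s^2) Vandermonde in the nodes s^2 (exponents enumerated by r), so its
  determinant is a polynomial in X that is nonzero exactly when the squared singular values are
  distinct and nonzero.\<close>

definition centered_gram :: "real^'p^'m \<Rightarrow> real^'p^'p" where
  "centered_gram X = transpose (centering ** X) ** (centering ** X)"

definition spectral_discriminant :: "('n::finite \<Rightarrow> nat) \<Rightarrow> real^'p^'m \<Rightarrow> real" where
  "spectral_discriminant r X = det (trace_hankel (centered_gram X) r)"

definition polynomial_matrix_function :: "('a::real_normed_vector \<Rightarrow> real^'k^'l) \<Rightarrow> bool" where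
  "polynomial_matrix_function M \<longleftrightarrow> (\<forall>i j. real_polynomial_function (\<lambda>x. M x $ i $ j))"

lemma polynomial_matrix_function_id: "polynomial_matrix_function (\<lambda>X::real^'k^'l. X)"
  unfolding polynomial_matrix_function_def
  using bounded_linear_compose[OF bounded_linear_vec_nth bounded_linear_vec_nth] by auto

lemma polynomial_matrix_function_const: "polynomial_matrix_function (\<lambda>x. C)"
  by (simp add: polynomial_matrix_function_def real_polynomial_function.intros(2))

lemma polynomial_matrix_function_mult:
  "polynomial_matrix_function A \<Longrightarrow> polynomial_matrix_function B \<Longrightarrow> polynomial_matrix_function (\<lambda>x. A x ** B x)"
  unfolding polynomial_matrix_function_def matrix_matrix_mult_def
  by (auto intro!: real_polynomial_function_sum real_polynomial_function.intros(4))

lemma polynomial_matrix_function_transpose: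
  "polynomial_matrix_function A \<Longrightarrow> polynomial_matrix_function (\<lambda>x. transpose (A x))"
  by (simp add: polynomial_matrix_function_def transpose_def)

lemma polynomial_matrix_function_matpow:
  "polynomial_matrix_function A \<Longrightarrow> polynomial_matrix_function (\<lambda>x. matpow (A x) e)"
  by (induction e) (auto intro: polynomial_matrix_function_mult polynomial_matrix_function_const)

lemma real_polynomial_function_trace:
  "polynomial_matrix_function A \<Longrightarrow> real_polynomial_function (\<lambda>x. trace (A x))"
  unfolding polynomial_matrix_function_def trace_def by (auto intro!: real_polynomial_function_sum)

lemma real_polynomial_function_det:
  "polynomial_matrix_function A \<Longrightarrow> real_polynomial_function (\<lambda>x. det (A x))"
  unfolding polynomial_matrix_function_def det_def
  by (auto intro!: real_polynomial_function_sum real_polynomial_function.intros(4)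
      real_polynomial_function.intros(2) real_polynomial_function_prod)

lemma real_polynomial_function_spectral_discriminant:
  "real_polynomial_function (spectral_discriminant r :: real^'p^'m \<Rightarrow> real)"
proof -
  have gram: "polynomial_matrix_function (\<lambda>X::real^'p^'m. centered_gram X)"
    unfolding centered_gram_def
    by (intro polynomial_matrix_function_mult polynomial_matrix_function_transpose
        polynomial_matrix_function_const polynomial_matrix_function_id)
  have "polynomial_matrix_function (\<lambda>X::real^'p^'m. trace_hankel (centered_gram X) r)"
    unfolding polynomial_matrix_function_def trace_hankel_def
    using real_polynomial_function_trace[OF polynomial_matrix_function_matpow[OF gram]]
    by (simp del: matpow.simps)
  then show ?thesis
    unfolding spectral_discriminant_def[abs_def] by (rule real_polynomial_function_det)
qed

lemma spectral_discriminant_factor: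
  assumes "centering ** X = U ** diag_matrix s ** transpose V"
    and "transpose U ** U = mat 1" and "transpose V ** V = mat 1"
  shows "spectral_discriminant r X = det (power_sum_hankel (\<lambda>k. (s k)^2) r)"
  unfolding spectral_discriminant_def centered_gram_def assms(1) gram_orthonormal_factor[OF assms(2)]
    trace_hankel_orthonormal_conj[OF assms(3)] ..

lemma spectral_discriminant_is_svd:
  assumes "is_svd (centering ** X) U L V"
  shows "spectral_discriminant r X = det (power_sum_hankel (\<lambda>k. (L $ k $ k)^2) r)"
  using assms diag_mat_imp_eq_diag_matrix[of L]
  by (intro spectral_discriminant_factor) (auto simp: is_svd_def)

lemma is_svd_simple_if_spectral_discriminant_nonzero:
  fixes L :: "real^('n::{finite,linorder})^('n::{finite,linorder})"
    and r :: "'n::{finite,linorder} \<Rightarrow> nat"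
  assumes svd: "is_svd (centering ** X) U L V" and disc: "spectral_discriminant r X \<noteq> 0"
  shows "L $ k $ k > 0" and "k < l \<Longrightarrow> L $ l $ l < L $ k $ k"
proof -
  have "det (power_sum_hankel (\<lambda>k. (L $ k $ k)^2) r) \<noteq> 0"
    using disc by (simp add: spectral_discriminant_is_svd[OF svd])
  note nz = det_power_sum_hankel_nonzero_imp[OF this]
  have nonneg: "L $ k $ k \<ge> 0" "k \<le> l \<Longrightarrow> L $ l $ l \<le> L $ k $ k" for k l
    using svd by (simp_all add: is_svd_def)
  show "L $ k $ k > 0" using nz(2)[of k] nonneg(1)[of k] by (simp add: order_less_le)
  show "L $ l $ l < L $ k $ k" if "k < l"
    using nz(1) nonneg(2)[of k l] that by (auto simp: order_less_le inj_def)
qed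

lemma centering_mult_zero_column_sums:
  fixes U :: "real^'n^'m"
  assumes "\<And>k. (\<Sum>i\<in>UNIV. U $ i $ k) = 0"
  shows "centering ** U = U"
proof -
  have "(\<Sum>j\<in>UNIV. ((if i = j then 1 else 0) - 1 / real CARD('m)) * U $ j $ k) = U $ i $ k" for i k
    using assms[of k]
    by (simp add: left_diff_distrib sum_subtractf sum_divide_distrib[symmetric]
        if_distrib[of "\<lambda>x. x * _"] cong: if_cong)
  then show ?thesis
    by (simp add: centering_def matrix_matrix_mult_def mat_def vec_eq_iff)
qed

lemma exists_orthonormal_centered_frame:
  assumes "CARD('m) = CARD('n) + 1"
  obtains U :: "real^'n::finite^'m" where "transpose U ** U = mat 1" and "centering ** U = U"
proof -
  define one :: "real^'m" where "one = (\<chi> i. 1)"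
  define S where "S = {x. one \<bullet> x = 0}"
  obtain B where BS: "B \<subseteq> S" and B_orth: "pairwise orthogonal B"
    and B_norm: "\<And>x. x \<in> B \<Longrightarrow> norm x = 1" and B_card: "card B = dim S"
    using orthonormal_basis_subspace[OF subspace_hyperplane[of one]] unfolding S_def by metis
  have "one \<noteq> 0" by (simp add: one_def vec_eq_iff)
  then have "card B = CARD('n)"
    using B_card dim_hyperplane[of one] assms by (simp add: S_def)
  moreover have "finite B"
    using \<open>card B = CARD('n)\<close> by (metis card.infinite card_0_eq finite_class.finite_UNIV UNIV_not_empty)
  ultimately obtain u where u: "bij_betw u (UNIV::'n set) B"
    by (metis finite_same_card_bij finite_class.finite_UNIV)
  define U :: "real^'n^'m" where "U = (\<chi> i k. u k $ i)"
  show ?thesis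
  proof
    have "u k \<bullet> u l = (if k = l then 1 else 0)" for k l
      using u B_norm B_orth
      by (auto simp: bij_betw_def inj_def pairwise_def orthogonal_def norm_eq_1 image_subset_iff) metis
    then show "transpose U ** U = mat 1"
      by (simp add: U_def transpose_def matrix_matrix_mult_def mat_def vec_eq_iff inner_vec_def)
    have "u k \<in> S" for k using u BS by (auto simp: bij_betw_def)
    then show "centering ** U = U"
      by (intro centering_mult_zero_column_sums) (simp add: U_def S_def one_def inner_vec_def)
  qed
qed

lemma exists_orthonormal_frame:
  assumes "CARD('n) \<le> CARD('p)"
  obtains V :: "real^'n::finite^'p::finite" where "transpose V ** V = mat 1"
proof -
  obtain b :: "'n \<Rightarrow> 'p" where "inj b"
    using card_le_inj[OF finite_class.finite_UNIV finite_class.finite_UNIV] assms by auto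
  define V :: "real^'n^'p" where "V = (\<chi> i k. if i = b k then 1 else 0)"
  have "(\<Sum>i\<in>UNIV. (if i = b k then 1 else 0) * (if i = b l then 1 else 0)) = (if k = l then 1 else (0::real))"
    for k l
    using \<open>inj b\<close> by (auto simp: if_distrib[of "\<lambda>x. x * _"] inj_def cong: if_cong)
  then have "transpose V ** V = mat 1"
    by (simp add: V_def transpose_def matrix_matrix_mult_def mat_def vec_eq_iff)
  then show ?thesis ..
qed

lemma exists_spectral_discriminant_nonzero:
  fixes r :: "'n::finite \<Rightarrow> nat"
  assumes "CARD('m) = CARD('n) + 1" and "CARD('n) \<le> CARD('p)"
    and r: "bij_betw r UNIV {..<CARD('n)}"
  shows "\<exists>X::real^'p^'m. spectral_discriminant r X \<noteq> 0"
proof -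
  obtain U :: "real^'n^'m" where U: "transpose U ** U = mat 1" "centering ** U = U"
    using exists_orthonormal_centered_frame[OF assms(1)] by blast
  obtain V :: "real^'n^'p" where V: "transpose V ** V = mat 1"
    using exists_orthonormal_frame[OF assms(2)] by blast
  define s where "s k = real (r k) + 1" for k
  define X where "X = U ** diag_matrix s ** transpose V"
  have "centering ** X = X" by (simp add: X_def matrix_mul_assoc U(2))
  then have "spectral_discriminant r X = det (power_sum_hankel (\<lambda>k. (s k)^2) r)"
    using U(1) V by (intro spectral_discriminant_factor) (simp_all add: X_def)
  moreover have "inj (\<lambda>k. (s k)^2)"
    using r by (auto simp: inj_def s_def bij_betw_def power2_eq_iff_nonneg)
  then have "det (power_sum_hankel (\<lambda>k. (s k)^2) r) \<noteq> 0"
    using det_vandermonde_nonzero[OF _ r] by (simp add: det_power_sum_hankel s_def)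
  ultimately show ?thesis by (intro exI[of _ X]) simp
qed

section \<open>Invariance of the Gaussian model\<close>

lemma matrix_mult_transpose_row:
  fixes X :: "real^'p^'m" and S :: "real^'p^'p"
  shows "(X ** transpose S) $ i = S *v (X $ i)"
  by (simp add: vec_eq_iff matrix_matrix_mult_def matrix_vector_mult_def transpose_def mult.commute)

lemma linear_matrix_mult_right: "linear (\<lambda>X::real^'n^'m. X ** (A::real^'k^'n))"
  by (rule linearI)
    (simp_all add: vec_eq_iff matrix_matrix_mult_def sum.distrib distrib_right sum_distrib_left mult.assoc)

lemma linear_matrix_mult_left: "linear (\<lambda>X::real^'n^'m. (A::real^'m^'k) ** X)"
  by (rule linearI) (simp_all add: matrix_add_ldistrib matrix_scalar_ac scalar_matrix_assoc)

lemma bounded_linear_matrix_sandwich: "bounded_linear (\<lambda>X::real^'n^'m. (A::real^'m^'k) ** X ** (B::real^'l^'n))"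
  using linear_compose[OF linear_matrix_mult_left linear_matrix_mult_right]
  by (simp add: o_def linear_conv_bounded_linear)

lemma borel_measurable_matrix_affine:
  "(\<lambda>X::real^'n^'m. X ** (A::real^'k^'n) + C) \<in> borel_measurable borel"
  using linear_matrix_mult_right[of A]
  by (intro borel_measurable_continuous_onI continuous_intros linear_continuous_on)
    (simp add: linear_conv_bounded_linear)

lemma norm_matrix_mult_transpose_orthogonal:
  fixes X :: "real^'p^'m" and S :: "real^'p^'p"
  assumes "orthogonal_matrix S"
  shows "norm (X ** transpose S) = norm X"
proof -
  have "(S *v x) \<bullet> (S *v x) = x \<bullet> x" for x :: "real^'p"
  proof -
    have "(S *v x) \<bullet> (S *v x) = (x v* transpose S) \<bullet> (S *v x)" by simp
    also have "\<dots> = x \<bullet> (transpose S *v (S *v x))" by (rule dot_lmul_matrix)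
    finally show ?thesis using assms by (simp add: matrix_vector_mul_assoc orthogonal_matrix)
  qed
  then show ?thesis
    by (simp add: norm_eq_sqrt_inner inner_vec_def[of "X ** transpose S"] inner_vec_def[of X]
        matrix_mult_transpose_row)
qed

lemma matrix_inv_invertible:
  assumes "invertible A"
  shows "A ** matrix_inv A = mat 1" and "matrix_inv A ** A = mat 1"
  using someI_ex[OF assms[unfolded invertible_def]] by (simp_all add: matrix_inv_def)

lemma spd_mat_invertible:
  assumes "spd_mat A"
  shows "invertible A"
proof -
  have "x = 0" if "A *v x = 0" for x
    using assms that by (metis inner_zero_right less_irrefl spd_mat_def)
  then have "\<exists>B. B ** A = mat 1" by (simp add: matrix_left_invertible_ker)
  then show ?thesis using invertible_left_inverse by blast
qed

lemma matrix_inv_orthogonal_conj: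
  assumes "invertible A" and "orthogonal_matrix S" and SAS: "transpose S ** A ** S = A"
  shows "transpose S ** matrix_inv A ** S = matrix_inv A"
proof -
  let ?N = "matrix_inv A"
  note inv = matrix_inv_invertible[OF assms(1)]
  have S: "S ** transpose S = mat 1" "transpose S ** S = mat 1"
    using assms(2) by (simp_all add: orthogonal_matrix_def)
  have AS: "A ** S = S ** A"
  proof -
    have "A ** S = S ** transpose S ** A ** S" by (simp add: S)
    also have "\<dots> = S ** (transpose S ** A ** S)" by (simp add: matrix_mul_assoc)
    finally show ?thesis by (simp add: SAS)
  qed
  have NS: "?N ** S = S ** ?N"
  proof -
    have "?N ** S = ?N ** S ** (A ** ?N)" by (simp add: inv)
    also have "\<dots> = ?N ** (A ** S) ** ?N" by (simp add: AS matrix_mul_assoc)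
    also have "\<dots> = ?N ** A ** S ** ?N" by (simp add: matrix_mul_assoc)
    finally show ?thesis by (simp add: inv)
  qed
  have "transpose S ** ?N ** S = transpose S ** (S ** ?N)" by (simp add: NS matrix_mul_assoc[symmetric])
  also have "\<dots> = ?N" by (simp add: matrix_mul_assoc S)
  finally show ?thesis .
qed

lemma continuous_on_mvn_density: "continuous_on UNIV (mvn_density mu Theta)"
  unfolding mvn_density_def divide_inverse
  by (intro continuous_intros matrix_vector_mult_linear_continuous_on[THEN continuous_on_compose2]) auto

lemma mvn_density_orthogonal_invariant:
  assumes "transpose S ** matrix_inv Theta ** S = matrix_inv Theta"
  shows "mvn_density mu Theta (mu + S *v (x - mu)) = mvn_density mu Theta x"
proof -
  let ?N = "matrix_inv Theta"
  have "(S *v (x - mu)) \<bullet> (?N *v (S *v (x - mu))) = ((x - mu) v* transpose S) \<bullet> (?N *v (S *v (x - mu)))"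
    by simp
  also have "\<dots> = (x - mu) \<bullet> (transpose S *v (?N *v (S *v (x - mu))))" by (rule dot_lmul_matrix)
  also have "\<dots> = (x - mu) \<bullet> ((transpose S ** ?N ** S) *v (x - mu))"
    by (simp add: matrix_vector_mul_assoc matrix_mul_assoc)
  finally show ?thesis by (simp add: mvn_density_def assms)
qed

lemma borel_measurable_gauss_rows_density:
  "(\<lambda>X::real^'p^'m. \<Prod>i\<in>UNIV. ennreal (mvn_density mu Theta (X $ i))) \<in> borel_measurable borel"
proof -
  have [measurable]: "mvn_density mu Theta \<in> borel_measurable borel"
    by (rule borel_measurable_continuous_onI[OF continuous_on_mvn_density])
  have [measurable]: "(\<lambda>X::real^'p^'m. X $ i) \<in> borel_measurable borel" for i
    by (intro borel_measurable_continuous_onI continuous_on_component continuous_on_id)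
  show ?thesis by measurable
qed

lemma sets_gauss_rows: "sets (gauss_rows mu Theta) = sets borel"
  by (simp add: gauss_rows_def)

lemma AE_gauss_rows_if_AE_lborel:
  fixes mu :: "real^'p" and P :: "real^'p^'m \<Rightarrow> bool"
  assumes "AE X in lborel. P X"
  shows "AE X in gauss_rows mu Theta. P X"
proof -
  have "(\<lambda>X::real^'p^'m. \<Prod>i\<in>UNIV. ennreal (mvn_density mu Theta (X $ i))) \<in> borel_measurable lborel"
    using borel_measurable_gauss_rows_density by simp
  then show ?thesis
    unfolding gauss_rows_def using assms by (subst AE_density) (auto elim: AE_mp)
qed

lemma distr_gauss_rows_orthogonal_invariant:
  fixes S :: "real^'p^'p" and mu :: "real^'p"
  assumes S: "orthogonal_matrix S" and SN: "transpose S ** matrix_inv Theta ** S = matrix_inv Theta"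
  defines "T \<equiv> \<lambda>X::real^'p^'m. X ** transpose S + (\<chi> i. mu - S *v mu)"
  shows "distr (gauss_rows mu Theta) (gauss_rows mu Theta) T = gauss_rows mu Theta"
proof -
  define g where "g = (\<lambda>X::real^'p^'m. \<Prod>i\<in>UNIV. ennreal (mvn_density mu Theta (X $ i)))"
  have [measurable]: "g \<in> borel_measurable borel"
    unfolding g_def by (rule borel_measurable_gauss_rows_density)
  have T_meas[measurable]: "T \<in> borel_measurable borel"
    unfolding T_def by (rule borel_measurable_matrix_affine)
  have "T X $ i = mu + S *v (X $ i - mu)" for X i
    by (simp add: T_def matrix_mult_transpose_row matrix_vector_mult_diff_distrib algebra_simps)
  then have gT: "g (T X) = g X" for X
    by (simp add: g_def mvn_density_orthogonal_invariant[OF SN])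
  have "distr lborel borel T = lborel"
    unfolding T_def using linear_matrix_mult_right norm_matrix_mult_transpose_orthogonal[OF S]
    by (rule distr_lborel_affine_isometry)
  then have "density lborel g = distr (density lborel g) borel T"
    using density_distr[of g borel T lborel] by (simp add: gT)
  then have "gauss_rows mu Theta = distr (gauss_rows mu Theta) borel T"
    by (simp add: gauss_rows_def g_def)
  also have "\<dots> = distr (gauss_rows mu Theta) (gauss_rows mu Theta) T"
    by (rule distr_cong) (simp_all add: sets_gauss_rows)
  finally show ?thesis ..
qed

lemma integral_fixed_by_invariant_map:
  fixes F :: "'a \<Rightarrow> 'b::{banach,second_countable_topology}"
  assumes T: "T \<in> measurable M M" and inv: "distr M M T = M" and F: "integrable M F"
    and A: "bounded_linear A" and FT: "AE x in M. F (T x) = A (F x)"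
  shows "A (integral\<^sup>L M F) = integral\<^sup>L M F"
proof -
  have F_meas[measurable]: "F \<in> borel_measurable M" using F by (rule borel_measurable_integrable)
  have "A \<in> borel_measurable borel"
    using A by (intro borel_measurable_continuous_onI linear_continuous_on)
  then have AF_meas: "(\<lambda>x. A (F x)) \<in> borel_measurable M"
    using measurable_compose[OF F_meas] by simp
  have "integral\<^sup>L M F = integral\<^sup>L (distr M M T) F" by (simp add: inv)
  also have "\<dots> = integral\<^sup>L M (\<lambda>x. F (T x))" using T by (rule integral_distr) measurable
  also have "\<dots> = integral\<^sup>L M (\<lambda>x. A (F x))"
    using measurable_compose[OF T F_meas] AF_meas FT by (rule integral_cong_AE)
  also have "\<dots> = A (integral\<^sup>L M F)" by (rule integral_bounded_linear[OF A F])
  finally show ?thesis ..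
qed

section \<open>Equivariance of the estimator\<close>

lemma centering_mult_const_rows: "centering ** (\<chi> i. v) = (0::real^'p^'m)"
proof -
  have "(\<Sum>k\<in>UNIV. ((if i = k then 1 else 0) - 1 / real CARD('m)) * v $ j) = 0" for i :: 'm and j :: 'p
    by (simp add: sum_distrib_right[symmetric] sum_subtractf)
  then show ?thesis
    by (simp add: centering_def matrix_matrix_mult_def mat_def vec_eq_iff)
qed

lemma diag_matrix_sign_conj:
  assumes "diag_mat D" and "\<And>k. (w k)^2 = 1"
  shows "diag_matrix w ** D ** diag_matrix w = D"
proof -
  have wDw: "w k * D $ k $ k * w k = D $ k $ k" for k
    using assms(2)[of k] by algebra
  have "diag_matrix w ** diag_matrix (\<lambda>k. D $ k $ k) ** diag_matrix w = diag_matrix (\<lambda>k. D $ k $ k)"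
    by (simp only: diag_matrix_mult_diag_matrix wDw)
  then show ?thesis using diag_mat_imp_eq_diag_matrix[OF assms(1)] by metis
qed

lemma svd_functional_equivariant:
  fixes H :: "real^('n::{finite,linorder})^('n::{finite,linorder}) \<Rightarrow> real^('n::{finite,linorder})^('n::{finite,linorder})"
    and L L' :: "real^('n::{finite,linorder})^('n::{finite,linorder})"
    and V V' :: "real^('n::{finite,linorder})^'p"
    and X :: "real^'p^'m" and r :: "'n::{finite,linorder} \<Rightarrow> nat"
  assumes H_diag: "\<And>A. diag_mat A \<Longrightarrow> diag_mat (H A)"
    and svd: "is_svd (centering ** X) U L V"
    and svd': "is_svd (centering ** (X ** transpose S + (\<chi> i. c))) U' L' V'"
    and S: "orthogonal_matrix S" and disc: "spectral_discriminant r X \<noteq> 0"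
  shows "V' ** H (L' ** L') ** transpose V' = S ** (V ** H (L ** L) ** transpose V) ** transpose S"
proof -
  have "centering ** (X ** transpose S + (\<chi> i. c)) = U ** L ** transpose (S ** V)"
    using svd by (simp add: is_svd_def matrix_add_ldistrib centering_mult_const_rows
        matrix_transpose_mul matrix_mul_assoc)
  moreover have "transpose (S ** V) ** (S ** V) = mat 1"
    using svd S by (simp add: is_svd_def orthogonal_matrix matrix_transpose_mul matrix_mul_assoc)
      (metis matrix_mul_assoc matrix_mul_lid)
  ultimately have svdS: "is_svd (centering ** (X ** transpose S + (\<chi> i. c))) U L (S ** V)"
    using svd by (simp add: is_svd_def)
  have disc': "spectral_discriminant r (X ** transpose S + (\<chi> i. c)) \<noteq> 0"
    using disc by (simp add: spectral_discriminant_is_svd[OF svd] spectral_discriminant_is_svd[OF svdS])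
  note unique = is_svd_unique[OF svdS svd' is_svd_simple_if_spectral_discriminant_nonzero(1)[OF svd disc] is_svd_simple_if_spectral_discriminant_nonzero(1)[OF svd' disc']
      is_svd_simple_if_spectral_discriminant_nonzero(2)[OF svd disc] is_svd_simple_if_spectral_discriminant_nonzero(2)[OF svd' disc']]
  obtain w where w: "\<And>k. (w k)^2 = 1" and V': "V' = S ** V ** diag_matrix w"
    using unique(2) by blast
  have "diag_mat (L ** L)"
    using svd by (simp add: is_svd_def diag_mat_mult)
  then have wHw: "diag_matrix w ** H (L ** L) ** diag_matrix w = H (L ** L)"
    using H_diag w by (intro diag_matrix_sign_conj)
  have "V' ** H (L' ** L') ** transpose V'
      = S ** (V ** (diag_matrix w ** H (L ** L) ** diag_matrix w) ** transpose V) ** transpose S"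
    by (simp add: unique(1) V' matrix_transpose_mul matrix_mul_assoc)
  then show ?thesis unfolding wHw .
qed

lemma AE_spectral_discriminant_nonzero:
  fixes r :: "'n::finite \<Rightarrow> nat" and mu :: "real^'p"
  assumes "CARD('m) = CARD('n) + 1" and "CARD('n) \<le> CARD('p)"
    and "bij_betw r UNIV {..<CARD('n)}"
  shows "AE X in gauss_rows mu Theta. spectral_discriminant r (X::real^'p^'m) \<noteq> 0"
proof (rule AE_gauss_rows_if_AE_lborel)
  obtain X0 :: "real^'p^'m" where "spectral_discriminant r X0 \<noteq> 0"
    using exists_spectral_discriminant_nonzero[OF assms] by blast
  from real_polynomial_function_zeros_null[OF real_polynomial_function_spectral_discriminant this]
  show "AE X in lborel. spectral_discriminant r (X::real^'p^'m) \<noteq> 0"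
    by (rule AE_I') auto
qed

lemma integral_svd_functional_orthogonal_invariant:
  fixes mu :: "real^'p" and Theta S :: "real^'p^'p"
    and H :: "real^('n::{finite,linorder})^('n::{finite,linorder}) \<Rightarrow> real^('n::{finite,linorder})^('n::{finite,linorder})"
    and Uf :: "real^'p^'m \<Rightarrow> real^('n::{finite,linorder})^'m"
    and Lf :: "real^'p^'m \<Rightarrow> real^('n::{finite,linorder})^('n::{finite,linorder})"
    and Vf :: "real^'p^'m \<Rightarrow> real^('n::{finite,linorder})^'p"
  assumes dims: "CARD('m) = CARD('n) + 1" "CARD('n) \<le> CARD('p)"
    and H_diag: "\<And>A. diag_mat A \<Longrightarrow> diag_mat (H A)"
    and svd: "\<And>X. is_svd (centering ** X) (Uf X) (Lf X) (Vf X)"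
    and F: "integrable (gauss_rows mu Theta) (\<lambda>X. c *\<^sub>R (Vf X ** H (Lf X ** Lf X) ** transpose (Vf X)))"
    and S: "orthogonal_matrix S" and SN: "transpose S ** matrix_inv Theta ** S = matrix_inv Theta"
  defines "I \<equiv> integral\<^sup>L (gauss_rows mu Theta) (\<lambda>X. c *\<^sub>R (Vf X ** H (Lf X ** Lf X) ** transpose (Vf X)))"
  shows "S ** I ** transpose S = I"
proof -
  let ?T = "\<lambda>X::real^'p^'m. X ** transpose S + (\<chi> i. mu - S *v mu)"
  obtain r :: "'n \<Rightarrow> nat" where r: "bij_betw r UNIV {..<CARD('n)}"
    using ex_bij_betw_finite_nat[of "UNIV :: 'n set"] by (auto simp: atLeast0LessThan)
  have "AE X in gauss_rows mu Theta. spectral_discriminant r (X::real^'p^'m) \<noteq> 0"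
    by (rule AE_spectral_discriminant_nonzero[OF dims r])
  then have equivariant: "AE X in gauss_rows mu Theta.
      c *\<^sub>R (Vf (?T X) ** H (Lf (?T X) ** Lf (?T X)) ** transpose (Vf (?T X)))
      = S ** (c *\<^sub>R (Vf X ** H (Lf X ** Lf X) ** transpose (Vf X))) ** transpose S"
  proof eventually_elim
    case (elim X)
    have "Vf (?T X) ** H (Lf (?T X) ** Lf (?T X)) ** transpose (Vf (?T X))
        = S ** (Vf X ** H (Lf X ** Lf X) ** transpose (Vf X)) ** transpose S"
      by (rule svd_functional_equivariant[OF H_diag svd svd S elim])
    moreover have "S ** (c *\<^sub>R M) ** transpose S = c *\<^sub>R (S ** M ** transpose S)" for M :: "real^'p^'p"
      by (simp add: matrix_scalar_ac scalar_matrix_assoc)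
    ultimately show ?case by simp
  qed
  have "?T \<in> measurable (gauss_rows mu Theta) (gauss_rows mu Theta)"
    using borel_measurable_matrix_affine by (simp add: measurable_cong_sets[OF sets_gauss_rows sets_gauss_rows])
  from integral_fixed_by_invariant_map[OF this distr_gauss_rows_orthogonal_invariant[OF S SN] F
      bounded_linear_matrix_sandwich equivariant]
  show ?thesis unfolding I_def .
qed

lemma orthogonal_sign_reflection:
  assumes "orthogonal_matrix P" and "\<And>k. (e k)^2 = 1"
  shows "orthogonal_matrix (P ** diag_matrix e ** transpose P)"
proof -
  have "orthogonal_matrix (diag_matrix e)"
    using assms(2) by (simp add: orthogonal_matrix diag_matrix_mult_diag_matrix power2_eq_square diag_matrix_one)
  then show ?thesis using assms(1) by (simp add: orthogonal_matrix_mul)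
qed

lemma sign_reflection_conj_diag:
  assumes P: "orthogonal_matrix P" and e: "\<And>k. (e k)^2 = 1" and C: "diag_mat C"
  defines "S \<equiv> P ** diag_matrix e ** transpose P"
  shows "transpose S ** (P ** C ** transpose P) ** S = P ** C ** transpose P"
proof -
  have "transpose S ** (P ** C ** transpose P) ** S
      = P ** (diag_matrix e ** (transpose P ** P) ** C ** (transpose P ** P) ** diag_matrix e) ** transpose P"
    by (simp add: S_def matrix_transpose_mul matrix_mul_assoc)
  also have "\<dots> = P ** C ** transpose P"
    using P diag_matrix_sign_conj[OF C e] by (simp add: orthogonal_matrix_def)
  finally show ?thesis .
qed

lemma diag_if_sign_reflection_invariant:
  fixes P I :: "real^'p^'p"
  assumes P: "orthogonal_matrix P"
    and inv: "\<And>e. (\<And>k. (e k)^2 = 1) \<Longrightarrow>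
      (P ** diag_matrix e ** transpose P) ** I ** transpose (P ** diag_matrix e ** transpose P) = I"
  shows "\<exists>C. diag_mat C \<and> I = P ** C ** transpose P"
proof (intro exI conjI)
  define C where "C = transpose P ** I ** P"
  have PP: "transpose P ** P = mat 1" "P ** transpose P = mat 1"
    using P by (simp_all add: orthogonal_matrix_def)
  have "P ** C ** transpose P = (P ** transpose P) ** I ** (P ** transpose P)"
    by (simp add: C_def matrix_mul_assoc)
  then show "I = P ** C ** transpose P" by (simp add: PP)
  show "diag_mat C"
    unfolding diag_mat_def
  proof (intro allI impI)
    fix i j :: 'p assume "i \<noteq> j"
    define e where "e k = (if k = i then -1 else 1::real)" for k
    have "(e k)^2 = 1" for k by (simp add: e_def)
    then have "C = transpose P ** ((P ** diag_matrix e ** transpose P) ** I ** transpose (P ** diag_matrix e ** transpose P)) ** P"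
      using inv by (simp add: C_def)
    also have "\<dots> = (transpose P ** P) ** diag_matrix e ** (transpose P ** I ** P) ** diag_matrix e ** (transpose P ** P)"
      by (simp add: matrix_transpose_mul matrix_mul_assoc)
    also have "\<dots> = diag_matrix e ** C ** diag_matrix e"
      by (simp add: PP C_def)
    finally have "C $ i $ j = e i * C $ i $ j * e j"
      by (metis diag_matrix_mult_nth mult_diag_matrix_nth)
    then show "C $ i $ j = 0" using \<open>i \<noteq> j\<close> by (simp add: e_def)
  qed
qed

theorem proposition2:
  fixes mu :: "real^'p"
    and Theta P D :: "real^'p^'p"
    and H :: "real^('n::{finite,linorder})^('n::{finite,linorder}) \<Rightarrow> real^('n::{finite,linorder})^('n::{finite,linorder})"
    and Uf :: "real^'p^'m \<Rightarrow> real^('n::{finite,linorder})^'m"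
    and Lf :: "real^'p^'m \<Rightarrow> real^('n::{finite,linorder})^('n::{finite,linorder})"
    and Vf :: "real^'p^'m \<Rightarrow> real^('n::{finite,linorder})^'p"
  assumes dims: "CARD('m) = CARD('n) + 1" "CARD('p) > CARD('n)"
    and spd: "spd_mat Theta"
    and eig: "orthogonal_matrix P" "diag_mat D" "Theta = P ** (D ** D) ** transpose P"
    and H_diag: "\<And>A. diag_mat A \<Longrightarrow> diag_mat (H A)"
    and svd: "\<And>X. is_svd (centering ** X) (Uf X) (Lf X) (Vf X)"
    and integrable:
      "integrable (gauss_rows mu Theta)
         (\<lambda>X. (1 / real CARD('n)) *\<^sub>R (Vf X ** H (Lf X ** Lf X) ** transpose (Vf X)))"
  shows "\<exists>C. diag_mat C \<and>
           integral\<^sup>L (gauss_rows mu Theta)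
             (\<lambda>X. (1 / real CARD('n)) *\<^sub>R (Vf X ** H (Lf X ** Lf X) ** transpose (Vf X)))
           = P ** C ** transpose P"
proof (rule diag_if_sign_reflection_invariant[OF eig(1)], goal_cases)
  case (1 e)
  let ?S = "P ** diag_matrix e ** transpose P"
  have S: "orthogonal_matrix ?S" by (rule orthogonal_sign_reflection[OF eig(1) 1])
  from diag_mat_mult[OF eig(2) eig(2)]
  have "transpose ?S ** Theta ** ?S = Theta"
    unfolding eig(3) by (rule sign_reflection_conj_diag[OF eig(1) 1])
  then have "transpose ?S ** matrix_inv Theta ** ?S = matrix_inv Theta"
    by (rule matrix_inv_orthogonal_conj[OF spd_mat_invertible[OF spd] S])
  then show ?case
    using dims by (intro integral_svd_functional_orthogonal_invariant[OF _ _ H_diag svd integrable S]) auto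
qed

end
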